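(* Let $k\ge2$ and $a_1,\dots,a_k\ge1$ be integers. Then $$\iota(\mathsf{K}_{a_1,\dots,a_k})=\begin{cases}1+\left(\sum_{i=1}^k\frac{a_i}{a_i-2}\right)^{-1}, & \text{if no } a_i=2,\\ 1, & \text{if some } a_i=2,\end{cases}$$ where $\iota(\mathsf{K}_{a_1,\dots,a_k})=\infty$ when no $a_i=2$ and $\sum_{i=1}^k\frac{a_i}{a_i-2}=0$. In particular, for $k\ge5$, $\iota(\mathsf{K}_{1,1,k})=-\frac{2}{k-4}$.
   Context: For a connected graph $G$ on vertices $v_1,\dots,v_n$, its distance matrix is $D=(d(v_i,v_j))_{i,j=1}^n$, where $d$ is the shortest-path distance; $\vec 1$ denotes the all-ones vector. $G$ is distance exceptional if $D\vec x=\vec 1$ has no solution. A curvature potential is a vector $\vec x$ with $D\vec x=\vec 1$. Curvature index $\iota(G)\in\mathbb{R}\cup\{\infty\}$: if $G$ is distance exceptional or has a curvature potential $\vec x$ with $\vec 1^\top\vec x\neq0$, then $\iota(G)$ is the unique real number with $\{D\vec x:\vec 1^\top\vec x=1\}\cap\mathbb{R}\vec 1=\{\iota(G)\vec 1\}$; otherwise $\iota(G)=\infty$. $\mathsf{K}_{a_1,\dots,a_k}$ is the complete multipartite graph with parts of sizes $a_1,\dots,a_k$. *)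

theory Defs
  imports Complex_Main "HOL-Library.Extended_Real"
begin

definition gdist :: "'v set \<Rightarrow> ('v \<Rightarrow> 'v \<Rightarrow> bool) \<Rightarrow> 'v \<Rightarrow> 'v \<Rightarrow> nat" where
  "gdist V E u v = (LEAST n. \<exists>p :: nat \<Rightarrow> 'v. p 0 = u \<and> p n = v \<and>
       (\<forall>m\<le>n. p m \<in> V) \<and> (\<forall>m<n. E (p m) (p (Suc m))))"

definition dist_matrix :: "'v set \<Rightarrow> ('v \<Rightarrow> 'v \<Rightarrow> bool) \<Rightarrow> 'v \<Rightarrow> 'v \<Rightarrow> real" where
  "dist_matrix V E u v = real (gdist V E u v)"

definition distance_exceptional :: "'v set \<Rightarrow> ('v \<Rightarrow> 'v \<Rightarrow> real) \<Rightarrow> bool" where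
  "distance_exceptional V D \<longleftrightarrow>
     \<not> (\<exists>x :: 'v \<Rightarrow> real. \<forall>i\<in>V. (\<Sum>j\<in>V. D i j * x j) = 1)"

definition curvature_potential :: "'v set \<Rightarrow> ('v \<Rightarrow> 'v \<Rightarrow> real) \<Rightarrow> ('v \<Rightarrow> real) \<Rightarrow> bool" where
  "curvature_potential V D x \<longleftrightarrow> (\<forall>i\<in>V. (\<Sum>j\<in>V. D i j * x j) = 1)"

definition curvature_index :: "'v set \<Rightarrow> ('v \<Rightarrow> 'v \<Rightarrow> real) \<Rightarrow> ereal" where
  "curvature_index V D =
     (if distance_exceptional V D \<or>
         (\<exists>x. curvature_potential V D x \<and> (\<Sum>j\<in>V. x j) \<noteq> 0)
      then ereal (THE t. {c. \<exists>x :: 'v \<Rightarrow> real. (\<Sum>j\<in>V. x j) = 1 \<and>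
                              (\<forall>i\<in>V. (\<Sum>j\<in>V. D i j * x j) = c)} = {t})
      else \<infinity>)"

text \<open>Complete multipartite graph K_{a_0,...,a_{k-1}}: vertices (i,j) with i<k, j<a i;
  two vertices adjacent iff they lie in different parts.\<close>
definition mp_vertices :: "nat \<Rightarrow> (nat \<Rightarrow> nat) \<Rightarrow> (nat \<times> nat) set" where
  "mp_vertices k a = {(i, j). i < k \<and> j < a i}"

definition mp_adj :: "nat \<times> nat \<Rightarrow> nat \<times> nat \<Rightarrow> bool" where
  "mp_adj u v \<longleftrightarrow> fst u \<noteq> fst v"

definition iota_mp :: "nat \<Rightarrow> (nat \<Rightarrow> nat) \<Rightarrow> ereal" where
  "iota_mp k a = curvature_index (mp_vertices k a) (dist_matrix (mp_vertices k a) mp_adj)"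

end

theory Submission imports Defs begin

text \<open>In a complete multipartite graph, distinct vertices are at distance 1 in different
  parts and 2 in the same part, so \<open>(D x)(i,j) = 1\<^sup>T x + (sum of x over part i) - 2 x(i,j)\<close>. Hence if
  \<open>D x = c 1\<close> with \<open>1\<^sup>T x = 1\<close>, then x takes a constant value \<open>y\<^sub>i\<close> on part i, with
  \<open>(a\<^sub>i - 2) y\<^sub>i = c - 1\<close> and \<open>\<Sum> a\<^sub>i y\<^sub>i = 1\<close>. A part of size 2 forces \<open>c = 1\<close>.
  Otherwise \<open>y\<^sub>i = (c - 1)/(a\<^sub>i - 2)\<close> and \<open>(c - 1) S = 1\<close>, which determines c when
  \<open>S \<noteq> 0\<close>; when \<open>S = 0\<close> there is no such c, while \<open>y\<^sub>i = 1/(a\<^sub>i - 2)\<close> gives a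
  curvature potential, so the index is infinite.\<close>

definition affine_constants :: "'v set \<Rightarrow> ('v \<Rightarrow> 'v \<Rightarrow> real) \<Rightarrow> real set" where
  "affine_constants V D =
     {c. \<exists>x. (\<Sum>j\<in>V. x j) = 1 \<and> (\<forall>i\<in>V. (\<Sum>j\<in>V. D i j * x j) = c)}"

lemma curvature_index_eq_ereal:
  assumes constants: "affine_constants V D = {t}"
  shows "curvature_index V D = ereal t"
proof -
  obtain x where x_sum: "(\<Sum>j\<in>V. x j) = 1" and x_row: "\<forall>i\<in>V. (\<Sum>j\<in>V. D i j * x j) = t"
    using constants unfolding affine_constants_def by blast
  have "distance_exceptional V D \<or> (\<exists>z. curvature_potential V D z \<and> (\<Sum>j\<in>V. z j) \<noteq> 0)"
  proof (cases "t = 0")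
    case False
    have "curvature_potential V D (\<lambda>j. x j / t)"
      using x_row False
      by (simp add: curvature_potential_def sum_divide_distrib[symmetric] times_divide_eq_right)
    moreover have "(\<Sum>j\<in>V. x j / t) \<noteq> 0"
      using x_sum False by (simp add: sum_divide_distrib[symmetric])
    ultimately show ?thesis by blast
  next
    case True
    show ?thesis
    proof (rule ccontr)
      assume "\<not> ?thesis"
      then obtain z where z_row: "\<forall>i\<in>V. (\<Sum>j\<in>V. D i j * z j) = 1"
        and z_sum: "(\<Sum>j\<in>V. z j) = 0"
        unfolding distance_exceptional_def curvature_potential_def by blast
      have "(\<Sum>j\<in>V. x j + z j) = 1" and "\<forall>i\<in>V. (\<Sum>j\<in>V. D i j * (x j + z j)) = 1"
        using x_sum z_sum x_row z_row True by (simp_all add: distrib_left sum.distrib)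
      then have "1 \<in> affine_constants V D"
        unfolding affine_constants_def by blast
      with constants True show False by simp
    qed
  qed
  moreover have "(THE t'. affine_constants V D = {t'}) = t"
    using constants by auto
  ultimately show ?thesis
    unfolding curvature_index_def affine_constants_def[symmetric] by simp
qed

lemma curvature_index_eq_infinity:
  assumes constants: "affine_constants V D = {}" and potential: "curvature_potential V D z"
  shows "curvature_index V D = \<infinity>"
proof -
  have "\<not> distance_exceptional V D"
    using potential unfolding distance_exceptional_def curvature_potential_def by blast
  moreover have "(\<Sum>j\<in>V. x j) = 0" if x: "curvature_potential V D x" for x
  proof (rule ccontr)
    assume nonzero: "(\<Sum>j\<in>V. x j) \<noteq> 0"
    define s where "s = (\<Sum>j\<in>V. x j)"
    have "(\<Sum>j\<in>V. x j / s) = 1" and "\<forall>i\<in>V. (\<Sum>j\<in>V. D i j * (x j / s)) = 1 / s"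
      using nonzero x unfolding s_def curvature_potential_def
      by (simp_all add: sum_divide_distrib[symmetric] times_divide_eq_right)
    then have "1 / s \<in> affine_constants V D"
      unfolding affine_constants_def by blast
    with constants show False by simp
  qed
  ultimately show ?thesis unfolding curvature_index_def by auto
qed

lemma gdist_eqI:
  fixes p :: "nat \<Rightarrow> 'v"
  assumes walk: "p 0 = u" "p n = v" "\<forall>m\<le>n. p m \<in> V" "\<forall>m<n. E (p m) (p (Suc m))"
    and no_shorter: "\<And>q m. m < n \<Longrightarrow> q 0 = u \<Longrightarrow> q m = v \<Longrightarrow>
                        \<forall>l<m. E (q l) (q (Suc l)) \<Longrightarrow> False"
  shows "gdist V E u v = n"
  unfolding gdist_def
proof (rule Least_equality)
  show "\<exists>p. p 0 = u \<and> p n = v \<and> (\<forall>m\<le>n. p m \<in> V) \<and> (\<forall>m<n. E (p m) (p (Suc m)))"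
    using walk by blast
next
  fix m
  assume "\<exists>q. q 0 = u \<and> q m = v \<and> (\<forall>l\<le>m. q l \<in> V) \<and> (\<forall>l<m. E (q l) (q (Suc l)))"
  then obtain q where "q 0 = u" "q m = v" "\<forall>l<m. E (q l) (q (Suc l))"
    by blast
  then show "n \<le> m"
    using no_shorter[of m q] not_le by blast
qed

lemma gdist_refl:
  assumes "u \<in> V"
  shows "gdist V E u u = 0"
  by (rule gdist_eqI[where p = "\<lambda>_. u"]) (use assms in auto)

lemma gdist_adjacent:
  assumes "u \<in> V" "v \<in> V" "E u v" "u \<noteq> v"
  shows "gdist V E u v = 1"
  by (rule gdist_eqI[where p = "\<lambda>m. if m = 0 then u else v"]) (use assms in auto)

lemma gdist_common_neighbour:
  assumes "u \<in> V" "v \<in> V" "w \<in> V" "E u w" "E w v" "u \<noteq> v" "\<not> E u v"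
  shows "gdist V E u v = 2"
proof (rule gdist_eqI[where p = "\<lambda>m. if m = 0 then u else if m = 1 then w else v"])
  fix q and m :: nat
  assume "m < 2" "q 0 = u" "q m = v" "\<forall>l<m. E (q l) (q (Suc l))"
  then show False
    using assms by (auto simp: less_2_cases_iff)
qed (use assms in \<open>auto simp: le_Suc_eq numeral_2_eq_2\<close>)

abbreviation mp_dist :: "nat \<Rightarrow> (nat \<Rightarrow> nat) \<Rightarrow> nat \<times> nat \<Rightarrow> nat \<times> nat \<Rightarrow> real" where
  "mp_dist k a \<equiv> dist_matrix (mp_vertices k a) mp_adj"

lemma mp_vertices_eq_Sigma: "mp_vertices k a = (SIGMA i:{..<k}. {..<a i})"
  unfolding mp_vertices_def by auto

lemma finite_mp_vertices: "finite (mp_vertices k a)"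
  unfolding mp_vertices_eq_Sigma by auto

lemma sum_mp_vertices: "(\<Sum>w\<in>mp_vertices k a. x w) = (\<Sum>i<k. \<Sum>j<a i. x (i, j))"
  unfolding mp_vertices_eq_Sigma by (simp add: sum.Sigma)

lemma mp_dist_eq:
  assumes "k \<ge> 2" "\<forall>i<k. a i \<ge> 1" and u: "u \<in> mp_vertices k a" and v: "v \<in> mp_vertices k a"
  shows "mp_dist k a u v = (if u = v then 0 else if fst u = fst v then 2 else 1)"
proof -
  have "\<exists>i<k. i \<noteq> fst u"
    using \<open>k \<ge> 2\<close> by presburger
  then obtain i where i: "i < k" "i \<noteq> fst u"
    by blast
  have "gdist (mp_vertices k a) mp_adj u v = 2" if "u \<noteq> v" "fst u = fst v"
  proof (rule gdist_common_neighbour[where w = "(i, 0)"])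
    show "(i, 0) \<in> mp_vertices k a"
      using assms(2) i by (force simp: mp_vertices_def)
  qed (use u v i that in \<open>auto simp: mp_adj_def\<close>)
  then show ?thesis
    using u v by (auto simp: dist_matrix_def mp_adj_def gdist_refl gdist_adjacent)
qed

lemma mp_dist_row:
  assumes k: "k \<ge> 2" and a: "\<forall>i<k. a i \<ge> 1" and u: "u \<in> mp_vertices k a"
  shows "(\<Sum>w\<in>mp_vertices k a. mp_dist k a u w * x w) =
           (\<Sum>i<k. \<Sum>j<a i. x (i, j)) + (\<Sum>j<a (fst u). x (fst u, j)) - 2 * x u"
proof -
  let ?V = "mp_vertices k a"
  have "(\<Sum>w\<in>?V. mp_dist k a u w * x w) =
        (\<Sum>w\<in>?V. x w + (if fst w = fst u then x w else 0) - (if w = u then 2 * x w else 0))"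
    by (rule sum.cong) (auto simp: mp_dist_eq[OF k a u])
  also have "\<dots> = (\<Sum>w\<in>?V. x w) + (\<Sum>w\<in>?V. if fst w = fst u then x w else 0) - 2 * x u"
    using u by (simp add: sum.distrib sum_subtractf finite_mp_vertices)
  also have "(\<Sum>w\<in>?V. if fst w = fst u then x w else 0) =
             (\<Sum>i<k. if i = fst u then (\<Sum>j<a i. x (i, j)) else 0)"
    unfolding sum_mp_vertices by (rule sum.cong) simp_all
  also have "\<dots> = (\<Sum>j<a (fst u). x (fst u, j))"
    using u by (auto simp: mp_vertices_def)
  finally show ?thesis
    by (simp add: sum_mp_vertices)
qed

lemma mp_dist_row_part_constant:
  assumes k: "k \<ge> 2" and a: "\<forall>i<k. a i \<ge> 1" and u: "u \<in> mp_vertices k a"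
  shows "(\<Sum>w\<in>mp_vertices k a. mp_dist k a u w * y (fst w)) =
           (\<Sum>i<k. real (a i) * y i) + (real (a (fst u)) - 2) * y (fst u)"
  using mp_dist_row[OF k a u, of "\<lambda>w. y (fst w)"] by (simp add: algebra_simps)

text \<open>The same set, restricted to vectors that take the value \<open>y i\<close> on part i.\<close>
definition part_constants :: "nat \<Rightarrow> (nat \<Rightarrow> nat) \<Rightarrow> real set" where
  "part_constants k a =
     {c. \<exists>y. (\<forall>i<k. (real (a i) - 2) * y i = c - 1) \<and> (\<Sum>i<k. real (a i) * y i) = 1}"

lemma affine_constants_mp:
  assumes k: "k \<ge> 2" and a: "\<forall>i<k. a i \<ge> 1"
  shows "affine_constants (mp_vertices k a) (mp_dist k a) = part_constants k a"
proof (intro set_eqI iffI)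
  fix c
  assume "c \<in> affine_constants (mp_vertices k a) (mp_dist k a)"
  then obtain x where x_sum: "(\<Sum>i<k. \<Sum>j<a i. x (i, j)) = 1"
    and x_row: "\<forall>u\<in>mp_vertices k a. (\<Sum>w\<in>mp_vertices k a. mp_dist k a u w * x w) = c"
    unfolding affine_constants_def sum_mp_vertices by blast
  define y where "y i = (1 + (\<Sum>j<a i. x (i, j)) - c) / 2" for i
  have x_part_constant: "x (i, j) = y i" if "i < k" "j < a i" for i j
    using x_row mp_dist_row[OF k a, of "(i, j)" x] x_sum that
    by (simp add: y_def mp_vertices_def)
  then have part_sum: "(\<Sum>j<a i. x (i, j)) = real (a i) * y i" if "i < k" for i
    using that by simp
  have "(real (a i) - 2) * y i = c - 1" if "i < k" for i
  proof -
    have "2 * y i = 1 + real (a i) * y i - c"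
      using part_sum[OF that] by (simp add: y_def field_simps)
    then show ?thesis
      by (simp add: algebra_simps)
  qed
  moreover have "(\<Sum>i<k. real (a i) * y i) = 1"
    using x_sum part_sum by simp
  ultimately show "c \<in> part_constants k a"
    unfolding part_constants_def by blast
next
  fix c
  assume "c \<in> part_constants k a"
  then obtain y where y_part: "\<forall>i<k. (real (a i) - 2) * y i = c - 1"
    and y_sum: "(\<Sum>i<k. real (a i) * y i) = 1"
    unfolding part_constants_def by blast
  have "(\<Sum>w\<in>mp_vertices k a. y (fst w)) = 1"
    using y_sum by (simp add: sum_mp_vertices)
  moreover have "(\<Sum>w\<in>mp_vertices k a. mp_dist k a u w * y (fst w)) = c"
    if u: "u \<in> mp_vertices k a" for u
  proof -
    have "fst u < k"
      using u by (auto simp: mp_vertices_def)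
    then show ?thesis
      using mp_dist_row_part_constant[OF k a u, of y] y_part y_sum by simp
  qed
  ultimately show "c \<in> affine_constants (mp_vertices k a) (mp_dist k a)"
    unfolding affine_constants_def by blast
qed

lemma part_constants_no_part_of_size_two:
  assumes "\<forall>i<k. a i \<noteq> 2"
  shows "part_constants k a = {c. (c - 1) * (\<Sum>i<k. real (a i) / (real (a i) - 2)) = 1}"
proof -
  have nonzero: "real (a i) - 2 \<noteq> 0" if "i < k" for i
    using assms that by auto
  have "(\<forall>i<k. (real (a i) - 2) * y i = c - 1) \<longleftrightarrow> (\<forall>i<k. y i = (c - 1) / (real (a i) - 2))"
    for c y
    using nonzero by (auto simp: field_simps)
  then have "part_constants k a =
      {c. (\<Sum>i<k. real (a i) * ((c - 1) / (real (a i) - 2))) = 1}"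
    unfolding part_constants_def by auto
  then show ?thesis
    by (simp add: sum_distrib_left mult.commute)
qed

lemma part_constants_part_of_size_two:
  assumes "i < k" "a i = 2"
  shows "part_constants k a = {1}"
proof -
  define y :: "nat \<Rightarrow> real" where "y j = (if j = i then 1 / 2 else 0)" for j
  have "\<forall>j<k. (real (a j) - 2) * y j = 0" and "(\<Sum>j<k. real (a j) * y j) = 1"
    using assms by (simp_all add: y_def if_distrib cong: if_cong)
  then have "1 \<in> part_constants k a"
    unfolding part_constants_def by auto
  moreover have "c = 1" if "c \<in> part_constants k a" for c
    using that assms unfolding part_constants_def by force
  ultimately show ?thesis
    by blast
qed

lemma iota_mp_no_part_of_size_two:
  assumes k: "k \<ge> 2" and a: "\<forall>i<k. a i \<ge> 1" and no_two: "\<forall>i<k. a i \<noteq> 2"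
    and S_def: "S = (\<Sum>i<k. real (a i) / (real (a i) - 2))"
  shows "iota_mp k a = (if S = 0 then \<infinity> else ereal (1 + 1 / S))"
proof -
  have constants: "affine_constants (mp_vertices k a) (mp_dist k a) = {c. (c - 1) * S = 1}"
    using affine_constants_mp[OF k a] part_constants_no_part_of_size_two[OF no_two]
    by (simp add: S_def)
  show ?thesis
  proof (cases "S = 0")
    case True
    define y where "y i = 1 / (real (a i) - 2)" for i
    have "curvature_potential (mp_vertices k a) (mp_dist k a) (\<lambda>w. y (fst w))"
      unfolding curvature_potential_def
    proof
      fix u
      assume u: "u \<in> mp_vertices k a"
      then have "fst u < k"
        by (auto simp: mp_vertices_def)
      then show "(\<Sum>w\<in>mp_vertices k a. mp_dist k a u w * y (fst w)) = 1"
        using mp_dist_row_part_constant[OF k a u, of y] True no_two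
        by (simp add: y_def S_def)
    qed
    with constants True show ?thesis
      unfolding iota_mp_def by (simp add: curvature_index_eq_infinity)
  next
    case False
    then have "{c. (c - 1) * S = 1} = {1 + 1 / S}"
      by (auto simp: field_simps)
    with constants False show ?thesis
      unfolding iota_mp_def by (simp add: curvature_index_eq_ereal)
  qed
qed

lemma iota_mp_part_of_size_two:
  assumes "k \<ge> 2" "\<forall>i<k. a i \<ge> 1" "i < k" "a i = 2"
  shows "iota_mp k a = 1"
  using curvature_index_eq_ereal[of "mp_vertices k a" "mp_dist k a" 1]
    affine_constants_mp part_constants_part_of_size_two assms
  by (simp add: iota_mp_def one_ereal_def)

theorem theorem4p3:
  fixes k :: nat and a :: "nat \<Rightarrow> nat"
  assumes "k \<ge> 2" and "\<forall>i<k. a i \<ge> 1"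
  shows "((\<forall>i<k. a i \<noteq> 2) \<longrightarrow>
            (let S = (\<Sum>i<k. real (a i) / (real (a i) - 2)) in
              iota_mp k a = (if S = 0 then \<infinity> else ereal (1 + 1 / S))))
       \<and> ((\<exists>i<k. a i = 2) \<longrightarrow> iota_mp k a = 1)
       \<and> (\<forall>n::nat. n \<ge> 5 \<longrightarrow>
            iota_mp 3 (\<lambda>i. if i = 0 then 1 else if i = 1 then 1 else n)
              = ereal (- 2 / (real n - 4)))"
proof (intro conjI impI allI)
  show "let S = (\<Sum>i<k. real (a i) / (real (a i) - 2)) in
          iota_mp k a = (if S = 0 then \<infinity> else ereal (1 + 1 / S))"
    if "\<forall>i<k. a i \<noteq> 2"
    using iota_mp_no_part_of_size_two[OF assms that] by simp
next
  show "iota_mp k a = 1" if "\<exists>i<k. a i = 2"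
    using iota_mp_part_of_size_two assms that by blast
next
  fix n :: nat
  assume n: "n \<ge> 5"
  let ?a = "\<lambda>i::nat. if i = 0 then 1 else if i = 1 then 1 else n"
  let ?S = "\<Sum>i<3. real (?a i) / (real (?a i) - 2)"
  have "iota_mp 3 ?a = (if ?S = 0 then \<infinity> else ereal (1 + 1 / ?S))"
    by (rule iota_mp_no_part_of_size_two) (use n in auto)
  also have "?S = (4 - real n) / (real n - 2)"
    using n by (simp add: numeral_3_eq_3 field_simps)
  also have "(if (4 - real n) / (real n - 2) = 0 then \<infinity>
              else ereal (1 + 1 / ((4 - real n) / (real n - 2)))) = ereal (- 2 / (real n - 4))"
    using n by (simp add: field_simps)
  finally show "iota_mp 3 ?a = ereal (- 2 / (real n - 4))" .
qed

end
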